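(* Let $A$ be a finite-dimensional complex associative algebra, regarded as a real associative algebra. On $\mathfrak{aff}(A)$ define $J(a,b)=(b,-a)$ and $K(a,b)=(-ia,ib)$ for $a,b\in A$. Then $J$ and $K$ are complex structures on $\mathfrak{aff}(A)$ and $JK=-KJ$; hence $\mathfrak{aff}(A)$ carries a hypercomplex structure.
   Context: For a real associative algebra $A$, $\mathfrak{aff}(A)$ is the Lie algebra $A\oplus A$ with bracket $[(a,b),(a',b')]=(aa'-a'a,\ ab'-a'b)$. A complex structure on a real Lie algebra $\mathfrak g$ is a linear map $J$ with $J^2=-\mathrm{Id}$ and $J[x,y]-[Jx,y]-[x,Jy]-J[Jx,Jy]=0$ for all $x,y$. A hypercomplex structure is a pair of anticommuting complex structures. *)

theory Defs
  imports "HOL-Analysis.Analysis"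
begin

definition complex_assoc_algebra :: "(complex \<Rightarrow> 'a::ring \<Rightarrow> 'a) \<Rightarrow> bool" where
  "complex_assoc_algebra smul \<longleftrightarrow>
     vector_space smul \<and>
     (\<forall>c x y. smul c (x * y) = smul c x * y \<and> smul c (x * y) = x * smul c y)"

definition fin_dim_complex :: "(complex \<Rightarrow> 'a::ring \<Rightarrow> 'a) \<Rightarrow> bool" where
  "fin_dim_complex smul \<longleftrightarrow> (\<exists>B. finite B \<and> module.span smul B = UNIV)"

text \<open>The underlying real scalar multiplication on aff(A) = A \<oplus> A.\<close>
definition aff_scaleR :: "(complex \<Rightarrow> 'a::ring \<Rightarrow> 'a) \<Rightarrow> real \<Rightarrow> 'a \<times> 'a \<Rightarrow> 'a \<times> 'a" where
  "aff_scaleR smul r p = (smul (complex_of_real r) (fst p), smul (complex_of_real r) (snd p))"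

definition aff_bracket :: "'a::ring \<times> 'a \<Rightarrow> 'a \<times> 'a \<Rightarrow> 'a \<times> 'a" where
  "aff_bracket p q =
     (fst p * fst q - fst q * fst p, fst p * snd q - fst q * snd p)"

definition aff_complex_structure ::
    "(complex \<Rightarrow> 'a::ring \<Rightarrow> 'a) \<Rightarrow> ('a \<times> 'a \<Rightarrow> 'a \<times> 'a) \<Rightarrow> bool" where
  "aff_complex_structure smul J \<longleftrightarrow>
     Vector_Spaces.linear (aff_scaleR smul) (aff_scaleR smul) J \<and>
     (\<forall>x. J (J x) = - x) \<and>
     (\<forall>x y. J (aff_bracket x y) - aff_bracket (J x) y - aff_bracket x (J y)
              - J (aff_bracket (J x) (J y)) = 0)"

definition aff_hypercomplex_structure ::
    "(complex \<Rightarrow> 'a::ring \<Rightarrow> 'a) \<Rightarrow> ('a \<times> 'a \<Rightarrow> 'a \<times> 'a) \<Rightarrow> ('a \<times> 'a \<Rightarrow> 'a \<times> 'a) \<Rightarrow> bool" where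
  "aff_hypercomplex_structure smul J K \<longleftrightarrow>
     aff_complex_structure smul J \<and> aff_complex_structure smul K \<and>
     (\<forall>x. J (K x) = - K (J x))"

end

theory Submission
  imports Defs
begin

text \<open>Both integrability identities are ring identities. For \<open>J (a, b) = (b, - a)\<close> they
  hold in any ring. For \<open>K (a, b) = (- L a, L b)\<close> they only use that \<open>L\<close> is additive,
  squares to \<open>-1\<close> and commutes with multiplication from both sides, so that
  \<open>L x * L y = - (x * y)\<close>; multiplication by \<open>\<i>\<close> in a complex algebra is such an \<open>L\<close>.
  Anticommutation \<open>J K = - K J\<close> is immediate from \<open>L (- a) = - L a\<close>.\<close>

lemma vector_space_aff_scaleR:
  fixes smul :: "complex \<Rightarrow> 'a::ring \<Rightarrow> 'a"
  assumes "vector_space smul"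
  shows "vector_space (aff_scaleR smul)"
proof -
  interpret vector_space smul by fact
  show ?thesis
    by unfold_locales (auto simp: aff_scaleR_def scale_right_distrib scale_left_distrib)
qed

lemma linear_aff_scaleR_I:
  fixes smul :: "complex \<Rightarrow> 'a::ring \<Rightarrow> 'a"
  assumes "vector_space smul"
    and "\<And>p q. F (p + q) = F p + F q"
    and "\<And>r p. F (aff_scaleR smul r p) = aff_scaleR smul r (F p)"
  shows "Vector_Spaces.linear (aff_scaleR smul) (aff_scaleR smul) F"
  using assms vector_space_aff_scaleR by (simp add: Vector_Spaces.linear_iff)

lemma aff_bracket_integrable_swap:
  fixes J :: "'a::ring \<times> 'a \<Rightarrow> 'a \<times> 'a"
  assumes J: "\<And>a b. J (a, b) = (b, - a)"
  shows "J (aff_bracket x y) - aff_bracket (J x) y - aff_bracket x (J y)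
           - J (aff_bracket (J x) (J y)) = 0"
  by (cases x, cases y) (simp add: J aff_bracket_def algebra_simps)

lemma aff_bracket_integrable_diag:
  fixes L :: "'a::ring \<Rightarrow> 'a" and K :: "'a \<times> 'a \<Rightarrow> 'a \<times> 'a"
  assumes K: "\<And>a b. K (a, b) = (- L a, L b)"
    and L_add: "\<And>x y. L (x + y) = L x + L y"
    and L_minus: "\<And>x. L (- x) = - L x"
    and L_L: "\<And>x. L (L x) = - x"
    and L_mult_left: "\<And>x y. L (x * y) = L x * y"
    and L_mult_right: "\<And>x y. L (x * y) = x * L y"
  shows "K (aff_bracket x y) - aff_bracket (K x) y - aff_bracket x (K y)
           - K (aff_bracket (K x) (K y)) = 0"
proof -
  have L_mult_L: "L x * L y = - (x * y)" for x y
    using L_mult_left[of x "L y"] L_mult_right[of x y] L_L[of "x * y"] by simp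
  have L_diff: "L (x - y) = L x - L y" for x y
    using L_add[of x "- y"] L_minus[of y] by simp
  show ?thesis
    by (cases x, cases y)
      (simp add: K aff_bracket_def L_diff L_add L_minus L_L L_mult_L
        L_mult_left[symmetric] L_mult_right[symmetric] algebra_simps)
qed

lemma aff_swap_anticommutes_diag:
  fixes L :: "'a::ring \<Rightarrow> 'a" and J K :: "'a \<times> 'a \<Rightarrow> 'a \<times> 'a"
  assumes J: "\<And>a b. J (a, b) = (b, - a)"
    and K: "\<And>a b. K (a, b) = (- L a, L b)"
    and L_minus: "\<And>x. L (- x) = - L x"
  shows "J (K x) = - K (J x)"
  by (cases x) (simp add: J K L_minus)

theorem mainTheorem4:
  fixes smul :: "complex \<Rightarrow> 'a::ring \<Rightarrow> 'a"
    and J K :: "'a \<times> 'a \<Rightarrow> 'a \<times> 'a"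
  assumes alg: "complex_assoc_algebra smul"
    and fin: "fin_dim_complex smul"
    and J_def: "\<And>a b. J (a, b) = (b, - a)"
    and K_def: "\<And>a b. K (a, b) = (- smul \<i> a, smul \<i> b)"
  shows "aff_complex_structure smul J \<and> aff_complex_structure smul K
         \<and> (\<forall>x. J (K x) = - K (J x))
         \<and> aff_hypercomplex_structure smul J K"
proof -
  have vs: "vector_space smul"
    and i_mult_left: "\<And>x y. smul \<i> (x * y) = smul \<i> x * y"
    and i_mult_right: "\<And>x y. smul \<i> (x * y) = x * smul \<i> y"
    using alg unfolding complex_assoc_algebra_def by blast+
  interpret vector_space smul by (fact vs)
  have i_i: "smul \<i> (smul \<i> x) = - x" for x
    by (simp add: scale_minus_left[symmetric])
  have linear_J: "Vector_Spaces.linear (aff_scaleR smul) (aff_scaleR smul) J"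
    by (rule linear_aff_scaleR_I[OF vs]) (auto simp: J_def aff_scaleR_def)
  have linear_K: "Vector_Spaces.linear (aff_scaleR smul) (aff_scaleR smul) K"
    by (rule linear_aff_scaleR_I[OF vs]) (auto simp: K_def aff_scaleR_def mult.commute scale_right_distrib)
  have cJ: "aff_complex_structure smul J"
    unfolding aff_complex_structure_def
    using linear_J aff_bracket_integrable_swap[OF J_def] by (auto simp: J_def)
  have cK: "aff_complex_structure smul K"
    unfolding aff_complex_structure_def
    using linear_K aff_bracket_integrable_diag[OF K_def scale_right_distrib scale_minus_right i_i i_mult_left i_mult_right]
    by (auto simp: K_def i_i)
  have JK: "\<forall>x. J (K x) = - K (J x)"
    using aff_swap_anticommutes_diag[OF J_def K_def scale_minus_right] by blast
  show ?thesis using cJ cK JK by (simp add: aff_hypercomplex_structure_def)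
qed

end
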